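(* Let $\mathcal{G}_{k-1}=(V,E_{k-1})$ be an unweighted simple directed graph, let $e_k=(u_k,v_k)$ with $u_k\neq v_k$, $u_k,v_k\in V$, and $e_k\notin E_{k-1}$, and let $\mathcal{G}_k=(V,E_{k-1}\cup\{e_k\})$. Let $\Delta\mathcal{F}_k=\mathcal{F}(\mathcal{G}_k)\setminus\mathcal{F}(\mathcal{G}_{k-1})$ and $$\mathcal{F}(\mathcal{G}'_{k-1})=\{\phi\in\mathcal{F}(\mathcal{G}_{k-1}) : r_\phi(u_k)=u_k,\ r_\phi(v_k)\neq u_k\}.$$ Then for every spanning converging forest $\phi\in\Delta\mathcal{F}_k$, the forest $\phi'=\phi\setminus\{e_k\}$ belongs to $\mathcal{F}(\mathcal{G}'_{k-1})$, and the map $\phi\mapsto\phi\setminus\{e_k\}$ is a bijection from $\Delta\mathcal{F}_k$ onto $\mathcal{F}(\mathcal{G}'_{k-1})$.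
   Context: A rooted converging tree is a weakly connected digraph without cycles in which one node (the root) has out-degree $0$ and every other node has out-degree $1$ (an isolated node is such a tree rooted at itself). A spanning converging forest of a digraph $\mathcal{G}=(V,E)$ is a spanning subgraph (containing all of $V$ and a subset of $E$, identified with its edge set) whose weakly connected components are rooted converging trees. $\mathcal{F}(\mathcal{G})$ denotes the set of all spanning converging forests of $\mathcal{G}$. For a forest $\phi$ and node $i$, $r_\phi(i)$ denotes the root of the tree of $\phi$ containing $i$. *)

theory Defs
  imports Main
begin

definition simple_digraph :: "'a set \<Rightarrow> ('a \<times> 'a) set \<Rightarrow> bool" where
  "simple_digraph V E \<longleftrightarrow> finite V \<and> E \<subseteq> V \<times> V \<and> (\<forall>v. (v, v) \<notin> E)"

definition out_deg :: "('a \<times> 'a) set \<Rightarrow> 'a \<Rightarrow> nat" where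
  "out_deg F i = card {j. (i, j) \<in> F}"

definition weak_comp :: "'a set \<Rightarrow> ('a \<times> 'a) set \<Rightarrow> 'a \<Rightarrow> 'a set" where
  "weak_comp V F i = {j \<in> V. (i, j) \<in> (F \<union> F\<inverse>)\<^sup>*}"

definition spanning_converging_forest ::
  "'a set \<Rightarrow> ('a \<times> 'a) set \<Rightarrow> ('a \<times> 'a) set \<Rightarrow> bool" where
  "spanning_converging_forest V E F \<longleftrightarrow>
     F \<subseteq> E \<and> acyclic F \<and>
     (\<forall>i \<in> V. \<exists>!r. r \<in> weak_comp V F i \<and> out_deg F r = 0) \<and>
     (\<forall>i \<in> V. out_deg F i \<le> 1)"

definition forests :: "'a set \<Rightarrow> ('a \<times> 'a) set \<Rightarrow> ('a \<times> 'a) set set" where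
  "forests V E = {F. spanning_converging_forest V E F}"

definition root_of :: "('a \<times> 'a) set \<Rightarrow> 'a \<Rightarrow> 'a" where
  "root_of F i = (THE r. (i, r) \<in> F\<^sup>* \<and> out_deg F r = 0)"

end

theory Submission
  imports Defs
begin

text \<open>Over a finite vertex set, a spanning converging forest is exactly an acyclic
  single-valued edge set: following the unique out-edges from any node ends in the unique sink
  of its weak component, which is its root. Removing the new edge \<open>(u, v)\<close> from a forest
  that uses it leaves \<open>u\<close> without an out-edge, i.e. a root, and acyclicity forbids a path
  from \<open>v\<close> back to \<open>u\<close>; conversely \<open>(u, v)\<close> can be added to a forest exactly under
  these two conditions, so deleting and inserting \<open>(u, v)\<close> are mutually inverse.\<close>

lemma out_deg_eq_0_iff: "finite F \<Longrightarrow> out_deg F r = 0 \<longleftrightarrow> r \<notin> Domain F"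
  by (auto simp: out_deg_def Image_singleton[symmetric])

lemma out_deg_le_1_iff:
  "finite F \<Longrightarrow> out_deg F i \<le> 1 \<longleftrightarrow> (\<forall>b c. (i, b) \<in> F \<longrightarrow> (i, c) \<in> F \<longrightarrow> b = c)"
  by (auto simp: out_deg_def card_le_Suc0_iff_eq Image_singleton[symmetric])

lemma finite_acyclic_reaches_sink:
  assumes "finite F" "acyclic F"
  shows "\<exists>r. (i, r) \<in> F\<^sup>* \<and> r \<notin> Domain F"
  using finite_acyclic_wf_converse[OF assms]
proof (induction i rule: wf_induct_rule)
  case (less i)
  show ?case
  proof (cases "i \<in> Domain F")
    case True
    then obtain j where "(i, j) \<in> F" by blast
    with less.IH[of j] show ?thesis by (meson converse_rtrancl_into_rtrancl converse_iff)
  qed blast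
qed

lemma rtrancl_from_sink: "(r, j) \<in> F\<^sup>* \<Longrightarrow> r \<notin> Domain F \<Longrightarrow> j = r"
  by (erule converse_rtranclE) auto

lemma single_valued_reachable_sink_unique:
  assumes "single_valued F" "(i, a) \<in> F\<^sup>*" "(i, b) \<in> F\<^sup>*" "a \<notin> Domain F" "b \<notin> Domain F"
  shows "a = b"
  using single_valued_confluent[OF assms(1-3)] rtrancl_from_sink assms(4,5) by metis

lemma single_valued_edge_reaches_sink_iff:
  assumes "single_valued F" "(a, b) \<in> F" "r \<notin> Domain F"
  shows "(a, r) \<in> F\<^sup>* \<longleftrightarrow> (b, r) \<in> F\<^sup>*"
proof
  assume "(a, r) \<in> F\<^sup>*"
  then show "(b, r) \<in> F\<^sup>*"
  proof (cases rule: converse_rtranclE)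
    case (step c)
    then show ?thesis using assms(1,2) by (auto dest: single_valuedD)
  qed (use assms(2,3) in blast)
qed (use assms(2) in \<open>rule converse_rtrancl_into_rtrancl\<close>)

lemma single_valued_weak_reaches_sink_iff:
  assumes "single_valued F" "(i, j) \<in> (F \<union> F\<inverse>)\<^sup>*" "r \<notin> Domain F"
  shows "(i, r) \<in> F\<^sup>* \<longleftrightarrow> (j, r) \<in> F\<^sup>*"
  using assms(2)
proof (induction j rule: rtrancl_induct)
  case (step j k)
  then show ?case
    using single_valued_edge_reaches_sink_iff[OF assms(1) _ assms(3), of j k]
      single_valued_edge_reaches_sink_iff[OF assms(1) _ assms(3), of k j]
    by blast
qed simp

lemma forests_iff:
  assumes "finite V" "E \<subseteq> V \<times> V"
  shows "F \<in> forests V E \<longleftrightarrow> F \<subseteq> E \<and> acyclic F \<and> single_valued F"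
proof -
  have "finite E" using assms by (meson finite_SigmaI finite_subset)
  have "F \<in> forests V E \<longleftrightarrow> single_valued F" if F: "F \<subseteq> E" "acyclic F"
  proof -
    have "finite F" using F(1) \<open>finite E\<close> finite_subset by blast
    have FV: "F \<subseteq> V \<times> V" using F(1) assms(2) by blast
    have deg: "(\<forall>i\<in>V. out_deg F i \<le> 1) \<longleftrightarrow> single_valued F"
      using FV unfolding out_deg_le_1_iff[OF \<open>finite F\<close>] single_valued_def by blast
    have "\<exists>!r. r \<in> weak_comp V F i \<and> out_deg F r = 0" if "single_valued F" "i \<in> V" for i
    proof -
      obtain r where r: "(i, r) \<in> F\<^sup>*" "r \<notin> Domain F"
        using finite_acyclic_reaches_sink[OF \<open>finite F\<close> F(2)] by blast
      have "r \<in> V" using r(1) \<open>i \<in> V\<close> FV by (cases rule: rtranclE) auto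
      moreover have "(i, r) \<in> (F \<union> F\<inverse>)\<^sup>*" using r(1) rtrancl_mono[of F "F \<union> F\<inverse>"] by blast
      moreover have "s = r" if "(i, s) \<in> (F \<union> F\<inverse>)\<^sup>*" "s \<notin> Domain F" for s
        using single_valued_weak_reaches_sink_iff[OF \<open>single_valued F\<close> that(1,2)]
          single_valued_reachable_sink_unique[OF \<open>single_valued F\<close> r(1) _ r(2) that(2)] by simp
      ultimately show ?thesis
        using r(2) unfolding weak_comp_def out_deg_eq_0_iff[OF \<open>finite F\<close>] by blast
    qed
    then show ?thesis
      using F deg unfolding forests_def spanning_converging_forest_def by blast
  qed
  moreover have "F \<in> forests V E \<Longrightarrow> F \<subseteq> E \<and> acyclic F"
    by (simp add: forests_def spanning_converging_forest_def)
  ultimately show ?thesis by blast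
qed

lemma root_of_eq_iff:
  assumes "finite F" "acyclic F" "single_valued F"
  shows "root_of F i = r \<longleftrightarrow> (i, r) \<in> F\<^sup>* \<and> r \<notin> Domain F"
proof -
  obtain s where s: "(i, s) \<in> F\<^sup>*" "s \<notin> Domain F"
    using finite_acyclic_reaches_sink[OF assms(1,2)] by blast
  have unique: "t = s" if "(i, t) \<in> F\<^sup>*" "t \<notin> Domain F" for t
    using single_valued_reachable_sink_unique[OF assms(3) that(1) s(1) that(2) s(2)] .
  have "root_of F i = s"
    unfolding root_of_def out_deg_eq_0_iff[OF assms(1)]
    by (rule the_equality) (use s unique in blast)+
  then show ?thesis
    using s unique by metis
qed

lemma forests_subset: "F \<in> forests V E \<Longrightarrow> F \<subseteq> E"
  by (simp add: forests_def spanning_converging_forest_def)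

lemma forests_insert_edge_diff:
  assumes "e \<notin> E"
  shows "forests V (insert e E) - forests V E = {F \<in> forests V (insert e E). e \<in> F}"
  using assms forests_subset[of _ V "insert e E"]
  unfolding forests_def spanning_converging_forest_def by blast

lemma single_valued_insert_iff:
  "(a, b) \<notin> F \<Longrightarrow> single_valued (insert (a, b) F) \<longleftrightarrow> single_valued F \<and> a \<notin> Domain F"
  by (auto simp: single_valued_def)

lemma insert_edge_in_forests_iff:
  assumes "finite V" "E \<subseteq> V \<times> V" "u \<in> V" "v \<in> V" "(u, v) \<notin> F"
  shows "insert (u, v) F \<in> forests V (insert (u, v) E)
    \<longleftrightarrow> F \<in> forests V E \<and> root_of F u = u \<and> root_of F v \<noteq> u"
proof -
  have "finite E" using assms(1,2) by (meson finite_SigmaI finite_subset)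
  have "insert (u, v) E \<subseteq> V \<times> V" using assms(2-4) by blast
  then have "insert (u, v) F \<in> forests V (insert (u, v) E)
      \<longleftrightarrow> F \<subseteq> E \<and> acyclic F \<and> single_valued F \<and> u \<notin> Domain F \<and> (v, u) \<notin> F\<^sup>*"
    using forests_iff[OF assms(1)] single_valued_insert_iff[OF assms(5)] assms(5) by auto
  moreover have "root_of F u = u \<and> root_of F v \<noteq> u \<longleftrightarrow> u \<notin> Domain F \<and> (v, u) \<notin> F\<^sup>*"
    if "F \<subseteq> E" "acyclic F" "single_valued F"
  proof -
    have "finite F" using that(1) \<open>finite E\<close> by (rule finite_subset)
    note root_iff = root_of_eq_iff[OF this that(2,3)]
    show ?thesis
      using root_iff[of u u] root_iff[of v u] by blast
  qed
  ultimately show ?thesis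
    using forests_iff[OF assms(1,2), of F] by blast
qed

theorem lemma5p1:
  fixes V :: "'a set" and E :: "('a \<times> 'a) set" and u v :: 'a
  assumes "simple_digraph V E"
    and "u \<in> V" and "v \<in> V" and "u \<noteq> v" and "(u, v) \<notin> E"
  shows "(\<forall>F \<in> forests V (E \<union> {(u, v)}) - forests V E.
            F - {(u, v)} \<in> {F' \<in> forests V E. root_of F' u = u \<and> root_of F' v \<noteq> u})
       \<and> bij_betw (\<lambda>F. F - {(u, v)}) (forests V (E \<union> {(u, v)}) - forests V E)
            {F' \<in> forests V E. root_of F' u = u \<and> root_of F' v \<noteq> u}"
proof -
  let ?new = "forests V (E \<union> {(u, v)}) - forests V E"
  let ?target = "{F' \<in> forests V E. root_of F' u = u \<and> root_of F' v \<noteq> u}"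
  have "finite V" "E \<subseteq> V \<times> V" using assms(1) by (auto simp: simple_digraph_def)
  note adding_edge = insert_edge_in_forests_iff[OF this assms(2,3)]
  have new_eq: "?new = {F \<in> forests V (insert (u, v) E). (u, v) \<in> F}"
    using forests_insert_edge_diff[OF assms(5), of V] by simp
  have deleted_in_target: "F - {(u, v)} \<in> ?target" if "F \<in> ?new" for F
  proof -
    have "F \<in> forests V (insert (u, v) E)" "(u, v) \<in> F" using that new_eq by auto
    then show ?thesis using adding_edge[of "F - {(u, v)}"] by (simp add: insert_absorb)
  qed
  have inserted_in_new: "insert (u, v) F' \<in> ?new" if "F' \<in> ?target" for F'
  proof -
    have "(u, v) \<notin> F'" using that assms(5) forests_subset by blast
    then show ?thesis using that adding_edge[of F'] new_eq by simp
  qed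
  have "bij_betw (\<lambda>F. F - {(u, v)}) ?new ?target"
  proof (rule bij_betw_byWitness[where f' = "insert (u, v)"])
    show "\<forall>F\<in>?new. insert (u, v) (F - {(u, v)}) = F" using new_eq by auto
    show "\<forall>F'\<in>?target. insert (u, v) F' - {(u, v)} = F'"
      using assms(5) forests_subset by fastforce
  qed (use deleted_in_target inserted_in_new in auto)
  with deleted_in_target show ?thesis by blast
qed

end
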